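(* Let $h:\mathbb{R}\to[0,+\infty)$ be a continuous super-multiplicative function (i.e. $h(xy)\ge h(x)h(y)$ for all $x,y\in\mathbb{R}$) such that $h(t)\ge t$ for all $t$. Let $f:(a,b)\to\mathbb{R}$ be a Lebesgue measurable function which is $h$-mid-convex, i.e. $$f\Big(\frac{x+y}{2}\Big)\le h\Big(\frac12\Big)\big(f(x)+f(y)\big)\quad\text{for all } x,y\in(a,b).$$ Then $f$ is continuous on $(a,b)$. *)

theory Defs
  imports "HOL-Analysis.Analysis"
begin

end

theory Submission
  imports Defs
begin

(* Supermultiplicativity and h \<ge> id force 1 \<ge> h 1 \<ge> h 2 * h (1/2) \<ge> 2 * h (1/2) \<ge> 1, so
   h (1/2) = 1/2 and f is midpoint convex.
   A measurable midpoint convex function is locally bounded above (Sierpinski): the superlevel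
   sets {f > n} of a compact interval have measure tending to 0, so once such a set has measure
   below d/2, every x admits a pair y, 2x - y, both outside it, and f x \<le> (f y + f (2x - y))/2 \<le> n.
   A midpoint convex function bounded above by M near x0 is continuous at x0 (Bernstein-Doetsch):
   iterating midpoint convexity towards x0 gives |f (x0 + v/2^k) - f x0| \<le> (M - f x0)/2^k. *)

definition midpoint_convex_on :: "'a::real_vector set \<Rightarrow> ('a \<Rightarrow> real) \<Rightarrow> bool" where
  "midpoint_convex_on S f \<longleftrightarrow> (\<forall>x\<in>S. \<forall>y\<in>S. f (midpoint x y) \<le> (f x + f y) / 2)"

lemma midpoint_convex_onD:
  "midpoint_convex_on S f \<Longrightarrow> x \<in> S \<Longrightarrow> y \<in> S \<Longrightarrow> f (midpoint x y) \<le> (f x + f y) / 2"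
  unfolding midpoint_convex_on_def by blast

lemma midpoint_convex_on_subset:
  "midpoint_convex_on S f \<Longrightarrow> T \<subseteq> S \<Longrightarrow> midpoint_convex_on T f"
  unfolding midpoint_convex_on_def by blast

lemma norm_scaleR_divide_power2_le:
  fixes v :: "'a::real_normed_vector"
  shows "norm (v /\<^sub>R 2 ^ k) \<le> norm v"
proof -
  have "norm v * 1 \<le> norm v * 2 ^ k"
    by (intro mult_left_mono) auto
  then show ?thesis
    by (simp add: field_simps)
qed

lemma midpoint_convex_on_dyadic_upper_bound:
  fixes f :: "'a::real_normed_vector \<Rightarrow> real"
  assumes mc: "midpoint_convex_on (cball x0 d) f"
    and bound: "\<And>x. x \<in> cball x0 d \<Longrightarrow> f x \<le> M"
    and v: "norm v \<le> d"
  shows "f (x0 + v /\<^sub>R 2 ^ k) - f x0 \<le> (M - f x0) / 2 ^ k"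
proof (induction k)
  case 0
  show ?case using bound[of "x0 + v"] v by (simp add: dist_norm)
next
  case (Suc k)
  from norm_scaleR_divide_power2_le[of k v] have "x0 + v /\<^sub>R 2 ^ k \<in> cball x0 d"
    using v by (simp add: dist_norm)
  moreover have "x0 \<in> cball x0 d"
    using order_trans[OF norm_ge_zero v] by simp
  moreover have "midpoint x0 (x0 + v /\<^sub>R 2 ^ k) = x0 + v /\<^sub>R 2 ^ Suc k"
    by (simp add: midpoint_def scaleR_add_right flip: scaleR_add_left)
  ultimately have "f (x0 + v /\<^sub>R 2 ^ Suc k) \<le> (f x0 + f (x0 + v /\<^sub>R 2 ^ k)) / 2"
    using midpoint_convex_onD[OF mc] by metis
  then have "f (x0 + v /\<^sub>R 2 ^ Suc k) - f x0 \<le> (f (x0 + v /\<^sub>R 2 ^ k) - f x0) / 2"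
    by simp
  also have "\<dots> \<le> (M - f x0) / 2 ^ k / 2"
    using Suc.IH by (rule divide_right_mono) simp
  finally show ?case
    by simp
qed

lemma midpoint_convex_on_dyadic_bound:
  fixes f :: "'a::real_normed_vector \<Rightarrow> real"
  assumes mc: "midpoint_convex_on (cball x0 d) f"
    and bound: "\<And>x. x \<in> cball x0 d \<Longrightarrow> f x \<le> M"
    and v: "norm v \<le> d"
  shows "\<bar>f (x0 + v /\<^sub>R 2 ^ k) - f x0\<bar> \<le> (M - f x0) / 2 ^ k"
proof -
  let ?p = "x0 + v /\<^sub>R 2 ^ k" and ?q = "x0 - v /\<^sub>R 2 ^ k"
  from norm_scaleR_divide_power2_le[of k v] have "?p \<in> cball x0 d" "?q \<in> cball x0 d"
    using v by (simp_all add: dist_norm)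
  moreover have "midpoint ?p ?q = x0"
    by (simp add: midpoint_eq_iff)
  ultimately have "f x0 \<le> (f ?p + f ?q) / 2"
    using midpoint_convex_onD[OF mc] by metis
  then have "f x0 - f ?p \<le> f ?q - f x0"
    by (simp add: field_simps)
  also have "\<dots> \<le> (M - f x0) / 2 ^ k"
    using midpoint_convex_on_dyadic_upper_bound[OF mc bound, of "- v" k] v by simp
  finally show ?thesis
    using midpoint_convex_on_dyadic_upper_bound[OF mc bound v, of k] by (auto simp: abs_le_iff)
qed

lemma midpoint_convex_on_bounded_above_imp_isCont:
  fixes f :: "'a::real_normed_vector \<Rightarrow> real"
  assumes mc: "midpoint_convex_on (cball x0 d) f"
    and bound: "\<And>x. x \<in> cball x0 d \<Longrightarrow> f x \<le> M"
    and "d > 0"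
  shows "isCont f x0"
  unfolding continuous_at_eps_delta
proof (intro allI impI)
  fix e :: real assume "e > 0"
  obtain k :: nat where "(M - f x0) / e < 2 ^ k"
    using real_arch_pow[of 2 "(M - f x0) / e"] by auto
  with \<open>e > 0\<close> have small: "(M - f x0) / 2 ^ k < e" by (simp add: field_simps)
  have "dist (f x) (f x0) < e" if "dist x x0 < d / 2 ^ k" for x
  proof -
    have "norm (2 ^ k *\<^sub>R (x - x0)) = 2 ^ k * dist x x0"
      by (simp only: norm_scaleR dist_norm) simp
    also have "\<dots> < d"
      using that by (simp add: field_simps)
    finally have "norm (2 ^ k *\<^sub>R (x - x0)) \<le> d"
      by simp
    from midpoint_convex_on_dyadic_bound[OF mc bound this, of k]
    show ?thesis using small by (simp add: dist_real_def)
  qed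
  with \<open>d > 0\<close> show "\<exists>\<delta>>0. \<forall>x. dist x x0 < \<delta> \<longrightarrow> dist (f x) (f x0) < e"
    by (intro exI[of _ "d / 2 ^ k"]) auto
qed

lemma (in finite_measure) measure_superlevel_tendsto_0:
  assumes "f \<in> borel_measurable M"
  shows "(\<lambda>n. measure M {x \<in> space M. real n < f x}) \<longlonglongrightarrow> 0"
proof -
  have "(\<lambda>n. measure M {x \<in> space M. real n < f x}) \<longlonglongrightarrow> measure M (\<Inter>n. {x \<in> space M. real n < f x})"
    using assms by (intro finite_Lim_measure_decseq) (auto simp: decseq_def)
  moreover have "(\<Inter>n. {x \<in> space M. real n < f x}) = {}"
    by (auto, metis reals_Archimedean2 less_asym)
  ultimately show ?thesis by simp
qed

lemma
  fixes A :: "real set"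
  assumes "A \<in> lmeasurable"
  shows lmeasurable_reflection: "(\<lambda>y. c - y) -` A \<in> lmeasurable"
    and measure_reflection: "measure lebesgue ((\<lambda>y. c - y) -` A) = measure lebesgue A"
proof -
  have reflect_eq: "(\<lambda>y. c - y) -` A = (\<lambda>y. (-1) *\<^sub>R y + c) ` A"
    by (force simp: image_iff)
  have "(\<lambda>y. c - y) \<in> lebesgue \<rightarrow>\<^sub>M lebesgue"
    using lebesgue_affine_measurable[of "\<lambda>_. -1" c] by (simp add: algebra_simps)
  then have "(\<lambda>y. c - y) -` A \<in> sets lebesgue"
    using measurable_sets[of _ lebesgue lebesgue A] assms by simp
  moreover have "emeasure lebesgue ((\<lambda>y. c - y) -` A) = emeasure lebesgue A"
    unfolding reflect_eq using emeasure_lebesgue_affine[of "-1" c A] by simp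
  ultimately show "(\<lambda>y. c - y) -` A \<in> lmeasurable"
    using assms by (metis fmeasurable_def mem_Collect_eq)
  show "measure lebesgue ((\<lambda>y. c - y) -` A) = measure lebesgue A"
    unfolding reflect_eq using measure_lebesgue_affine[of "-1" c A] by simp
qed

lemma symmetric_pair_avoiding_small_set:
  fixes A :: "real set"
  assumes A: "A \<in> lmeasurable" and small: "measure lebesgue A < d / 2"
  obtains y where "y \<in> {x..x + d}" "y \<notin> A" "2 * x - y \<notin> A"
proof -
  define B where "B = (\<lambda>y. 2 * x - y) -` A"
  have B: "B \<in> lmeasurable" "measure lebesgue B = measure lebesgue A"
    unfolding B_def using lmeasurable_reflection[OF A] measure_reflection[OF A] by auto
  have "measure lebesgue (A \<union> B) \<le> measure lebesgue A + measure lebesgue B"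
    using A B by (intro measure_Un_le) auto
  moreover have "d > 0"
    using small measure_nonneg[of lebesgue A] by linarith
  ultimately have "measure lebesgue (A \<union> B) < measure lebesgue {x..x + d}"
    using B small by simp
  moreover have "measure lebesgue {x..x + d} \<le> measure lebesgue (A \<union> B)"
    if "{x..x + d} \<subseteq> A \<union> B"
    using A B that by (intro measure_mono_fmeasurable) auto
  ultimately have "\<not> {x..x + d} \<subseteq> A \<union> B"
    by linarith
  then show ?thesis using that unfolding B_def by blast
qed

lemma midpoint_convex_measurable_bounded_above:
  fixes f :: "real \<Rightarrow> real"
  assumes mc: "midpoint_convex_on (cball c (2 * d)) f"
    and meas: "f \<in> borel_measurable (restrict_space lebesgue (cball c (2 * d)))"
    and "d > 0"
  obtains M where "\<And>x. x \<in> cball c d \<Longrightarrow> f x \<le> M"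
proof -
  let ?J = "cball c (2 * d)" and ?S = "\<lambda>n::nat. {y \<in> cball c (2 * d). real n < f y}"
  interpret J: finite_measure "restrict_space lebesgue ?J"
    using fmeasurableD2[OF lmeasurable_cball] by (intro finite_measureI) (simp add: emeasure_restrict_space)
  have "(\<lambda>n. measure (restrict_space lebesgue ?J) (?S n)) \<longlonglongrightarrow> 0"
    using J.measure_superlevel_tendsto_0[OF meas] by simp
  then have "\<forall>\<^sub>F n in sequentially. measure (restrict_space lebesgue ?J) (?S n) < d / 2"
    using \<open>d > 0\<close> by (intro order_tendstoD(2)) auto
  then obtain n where n: "measure (restrict_space lebesgue ?J) (?S n) < d / 2"
    by (meson eventually_sequentially order_refl)
  have "?S n = {y \<in> space (restrict_space lebesgue ?J). real n < f y}"
    by simp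
  also have "\<dots> \<in> sets (restrict_space lebesgue ?J)"
    using meas by measurable
  finally have "?S n \<in> sets lebesgue"
    by (simp add: sets_restrict_space_iff)
  then have S_lmeasurable: "?S n \<in> lmeasurable"
    by (rule fmeasurableI2[OF lmeasurable_cball, rotated]) blast
  have S_small: "measure lebesgue (?S n) < d / 2"
    using n by (subst (asm) measure_restrict_space) auto
  show ?thesis
  proof (rule that)
    fix x assume x: "x \<in> cball c d"
    obtain y where y: "y \<in> {x..x + d}" "y \<notin> ?S n" "2 * x - y \<notin> ?S n"
      using symmetric_pair_avoiding_small_set[OF S_lmeasurable S_small] .
    have "y \<in> ?J" "2 * x - y \<in> ?J"
      using x y(1) by (auto simp: cball_eq_atLeastAtMost)
    then have "f y \<le> real n" "f (2 * x - y) \<le> real n"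
      using y(2,3) by auto
    moreover have "f x \<le> (f y + f (2 * x - y)) / 2"
      using midpoint_convex_onD[OF mc \<open>y \<in> ?J\<close> \<open>2 * x - y \<in> ?J\<close>]
      by (simp add: midpoint_def)
    ultimately show "f x \<le> real n"
      by simp
  qed
qed

lemma midpoint_convex_measurable_imp_continuous_on:
  fixes f :: "real \<Rightarrow> real"
  assumes "open S" and mc: "midpoint_convex_on S f"
    and meas: "f \<in> borel_measurable (restrict_space lebesgue S)"
  shows "continuous_on S f"
proof (intro continuous_at_imp_continuous_on ballI)
  fix x0 assume "x0 \<in> S"
  with \<open>open S\<close> obtain e where "e > 0" and e: "cball x0 e \<subseteq> S"
    using open_contains_cball by blast
  define d where "d = e / 2"
  have "d > 0" "cball x0 (2 * d) \<subseteq> S"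
    using \<open>e > 0\<close> e by (auto simp: d_def)
  then obtain M where M: "\<And>x. x \<in> cball x0 d \<Longrightarrow> f x \<le> M"
    using midpoint_convex_measurable_bounded_above midpoint_convex_on_subset[OF mc]
      measurable_restrict_mono[OF meas] by metis
  have "cball x0 d \<subseteq> S"
    using \<open>cball x0 (2 * d) \<subseteq> S\<close> \<open>d > 0\<close> by (auto simp: subset_eq)
  then show "isCont f x0"
    using midpoint_convex_on_bounded_above_imp_isCont midpoint_convex_on_subset[OF mc] M \<open>d > 0\<close>
    by metis
qed

lemma supermultiplicative_ge_id_half:
  fixes h :: "real \<Rightarrow> real"
  assumes nonneg: "\<And>t. h t \<ge> 0"
    and supermult: "\<And>x y. h (x * y) \<ge> h x * h y"
    and ge_id: "\<And>t. h t \<ge> t"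
  shows "h (1/2) = 1/2"
proof -
  have "h 1 * h 1 \<le> h 1" and "1 \<le> h 1"
    using supermult[of 1 1] ge_id[of 1] by simp_all
  then have "h 1 \<le> 1"
    using mult_le_cancel_left_pos[of "h 1" "h 1" 1] by simp
  have "2 * h (1/2) \<le> h 2 * h (1/2)"
    using ge_id[of 2] nonneg[of "1/2"] by (intro mult_right_mono) auto
  also have "\<dots> \<le> h 1"
    using supermult[of 2 "1/2"] by simp
  finally show ?thesis
    using \<open>h 1 \<le> 1\<close> ge_id[of "1/2"] by simp
qed

theorem theorem3p3:
  fixes h f :: "real \<Rightarrow> real" and a b :: real
  assumes h_cont: "continuous_on UNIV h"
    and h_nonneg: "\<And>t. h t \<ge> 0"
    and h_supermult: "\<And>x y. h (x * y) \<ge> h x * h y"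
    and h_ge: "\<And>t. h t \<ge> t"
    and f_meas: "f \<in> borel_measurable (restrict_space lebesgue {a<..<b})"
    and f_midconv: "\<And>x y. x \<in> {a<..<b} \<Longrightarrow> y \<in> {a<..<b} \<Longrightarrow>
                      f ((x + y) / 2) \<le> h (1/2) * (f x + f y)"
  shows "continuous_on {a<..<b} f"
proof -
  have "h (1/2) = 1/2"
    using supermultiplicative_ge_id_half[OF h_nonneg h_supermult h_ge] .
  with f_midconv have "midpoint_convex_on {a<..<b} f"
    by (simp add: midpoint_convex_on_def midpoint_def)
  then show ?thesis
    using midpoint_convex_measurable_imp_continuous_on[OF open_greaterThanLessThan _ f_meas] by simp
qed

end
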